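(* For $g_1,g_2>0$ and $\sigma_1,\sigma_2>0$ let $p_i(m)=\frac{1}{\sqrt{2\pi}\sigma_i}e^{-m^2/(2\sigma_i^2)}$ and define the qubit dynamical maps $$\Lambda^{(12)}_t[\rho]=\iint dm_1dm_2\,p_1(m_1)p_2(m_2)\,e^{-\mathrm iK t}\rho\, e^{\mathrm iKt},\quad K=\tfrac12(g_1m_1\sigma_z+g_2m_2\sigma_x),$$ $\Lambda^{(1)}_t[\rho]=\int dm_1\,p_1(m_1)e^{-\mathrm i g_1m_1t\sigma_z/2}\rho e^{\mathrm i g_1m_1t\sigma_z/2}$ and $\Lambda^{(2)}_t[\rho]=\int dm_2\,p_2(m_2)e^{-\mathrm i g_2m_2t\sigma_x/2}\rho e^{\mathrm i g_2m_2t\sigma_x/2}$, with generators $\mathcal L^{(\mathsf x)}_t=\dot\Lambda^{(\mathsf x)}_t\circ(\Lambda^{(\mathsf x)}_t)^{-1}$. Then there exist parameters $g_1,g_2,\sigma_1,\sigma_2$ and a time $t>0$ at which all three maps are invertible and $\mathcal L^{(12)}_t\neq\mathcal L^{(1)}_t+\mathcal L^{(2)}_t$. Consequently, commutativity of each interaction Hamiltonian with the system Hamiltonian and with all environment Hamiltonians (but not with each other) does not suffice for the addition of single-environment generators to reproduce the true dynamics.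
   Context: This is the reduced qubit dynamics of a qubit coupled to two magnets (environments with vanishing free Hamiltonian, in the infinite-size limit with Gaussian magnetisation distributions) with $H_S=H_{E_1}=H_{E_2}=0$, $H_{I_1}=\frac12g_1\sigma_z\otimes\hat m_1$, $H_{I_2}=\frac12 g_2\sigma_x\otimes\hat m_2$; $\Lambda^{(1)}$, $\Lambda^{(2)}$ are the dynamics with only one magnet present. Here all interaction Hamiltonians commute with $H_S$ and with the environment Hamiltonians, but $[H_{I_1},H_{I_2}]\ne0$. *)

theory Defs
  imports "HOL-Analysis.Analysis"
begin

type_synonym qmat = "complex^2^2"

definition cscale :: "complex \<Rightarrow> qmat \<Rightarrow> qmat" where
  "cscale c A = (\<chi> i j. c * A$i$j)"

definition sigma_z :: qmat where
  "sigma_z = (\<chi> i j. if i = j then (if i = 1 then 1 else -1) else 0)"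

definition sigma_x :: qmat where
  "sigma_x = (\<chi> i j. if i = j then 0 else 1)"

definition mpow :: "qmat \<Rightarrow> nat \<Rightarrow> qmat" where
  "mpow A n = (((**) A) ^^ n) (mat 1)"

definition mexp :: "qmat \<Rightarrow> qmat" where
  "mexp A = (\<Sum>n. (1 / fact n) *\<^sub>R mpow A n)"

definition gauss :: "real \<Rightarrow> real \<Rightarrow> real" where
  "gauss s m = exp (- (m\<^sup>2) / (2 * s\<^sup>2)) / (sqrt (2 * pi) * s)"

definition evolve :: "qmat \<Rightarrow> real \<Rightarrow> qmat \<Rightarrow> qmat" where
  "evolve H t \<rho> = mexp (cscale (- \<i> * of_real t) H) ** \<rho> ** mexp (cscale (\<i> * of_real t) H)"

definition Lam12 :: "real \<Rightarrow> real \<Rightarrow> real \<Rightarrow> real \<Rightarrow> real \<Rightarrow> qmat \<Rightarrow> qmat" where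
  "Lam12 g1 g2 s1 s2 t \<rho> =
     (LINT m1|lborel. LINT m2|lborel.
        (gauss s1 m1 * gauss s2 m2) *\<^sub>R
          evolve ((1/2) *\<^sub>R ((g1 * m1) *\<^sub>R sigma_z + (g2 * m2) *\<^sub>R sigma_x)) t \<rho>)"

definition Lam1 :: "real \<Rightarrow> real \<Rightarrow> real \<Rightarrow> qmat \<Rightarrow> qmat" where
  "Lam1 g1 s1 t \<rho> =
     (LINT m1|lborel. gauss s1 m1 *\<^sub>R evolve ((1/2) *\<^sub>R ((g1 * m1) *\<^sub>R sigma_z)) t \<rho>)"

definition Lam2 :: "real \<Rightarrow> real \<Rightarrow> real \<Rightarrow> qmat \<Rightarrow> qmat" where
  "Lam2 g2 s2 t \<rho> =
     (LINT m2|lborel. gauss s2 m2 *\<^sub>R evolve ((1/2) *\<^sub>R ((g2 * m2) *\<^sub>R sigma_x)) t \<rho>)"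

definition generator :: "(real \<Rightarrow> qmat \<Rightarrow> qmat) \<Rightarrow> real \<Rightarrow> qmat \<Rightarrow> qmat" where
  "generator \<Lambda> t \<rho> = vector_derivative (\<lambda>s. \<Lambda> s (inv (\<Lambda> t) \<rho>)) (at t)"

definition regular_at :: "(real \<Rightarrow> qmat \<Rightarrow> qmat) \<Rightarrow> real \<Rightarrow> bool" where
  "regular_at \<Lambda> t \<longleftrightarrow> bij (\<Lambda> t) \<and> (\<forall>\<rho>. (\<lambda>s. \<Lambda> s \<rho>) differentiable (at t))"

end

theory Submission
  imports Defs "HOL-Probability.Probability"
begin

text \<open>Conjugating by \<open>exp (-i t (a \<sigma>\<^sub>z + b \<sigma>\<^sub>x) / 2)\<close> and averaging over independent standard
  Gaussians \<open>a\<close>, \<open>b\<close> kills every term that is odd in \<open>a\<close> or \<open>b\<close>, so all three dynamical maps have the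
  form \<open>\<rho> \<mapsto> P \<rho> + A \<sigma>\<^sub>z \<rho> \<sigma>\<^sub>z + B \<sigma>\<^sub>x \<rho> \<sigma>\<^sub>x\<close>. Such a map is diagonal in the Pauli basis,
  with eigenvalues \<open>P - A + B\<close>, \<open>P - A - B\<close>, \<open>P + A - B\<close> on \<open>\<sigma>\<^sub>x\<close>, \<open>\<sigma>\<^sub>y\<close>, \<open>\<sigma>\<^sub>z\<close>, and its generator
  is diagonal as well, with the logarithmic derivatives of these eigenvalues as eigenvalues.
  For one magnet the eigenvalues are \<open>1\<close> and \<open>exp (- t\<^sup>2 / 2)\<close>, so \<open>L\<^sub>1 + L\<^sub>2\<close> has eigenvalues
  \<open>-t, -2t, -t\<close>. For both magnets \<open>P + A + B = 1\<close>, and matching the three eigenvalues of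
  \<open>L\<^sub>1\<^sub>2\<close> with those of \<open>L\<^sub>1 + L\<^sub>2\<close> forces \<open>t (A + B) = 0\<close>; but \<open>A + B\<close> is the mean of
  \<open>sin\<^sup>2 (t \<surd>(a\<^sup>2 + b\<^sup>2) / 2)\<close>, which is positive for \<open>0 < t < 1\<close>. All couplings and widths are taken to be \<open>1\<close>.\<close>

section \<open>Exponentials of matrices squaring to a negative scalar\<close>

text \<open>A constant standing for the library abbreviation \<open>sinc\<close>, so that the simplifier does not
  split its \<open>if\<close> inside matrix computations.\<close>

definition sinc_fn :: "real \<Rightarrow> real" where
  "sinc_fn x = sinc x"

lemma sinc_fn_0 [simp]: "sinc_fn 0 = 1"
  by (simp add: sinc_fn_def)

lemma mult_sinc_fn: "x * sinc_fn x = sin x"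
  by (simp add: sinc_fn_def)

lemma abs_sinc_fn_le_1: "\<bar>sinc_fn x\<bar> \<le> 1"
  using abs_sin_x_le_abs_x[of x] by (auto simp: sinc_fn_def abs_divide divide_le_eq_1)

lemma borel_measurable_sinc_fn [measurable]: "sinc_fn \<in> borel_measurable borel"
  unfolding sinc_fn_def[abs_def] by (rule borel_measurable_sinc)

lemma mpow_0 [simp]: "mpow A 0 = mat 1"
  by (simp add: mpow_def)

lemma mpow_Suc: "mpow A (Suc n) = A ** mpow A n"
  by (simp add: mpow_def)

lemma matrix_mul_uminus_right: "A ** (- B) = - (A ** (B::qmat))"
  by (simp add: matrix_matrix_mult_def vec_eq_iff sum_negf)

lemma mpow_square_neg_scalar:
  assumes AA: "A ** A = (- x\<^sup>2) *\<^sub>R mat 1"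
  shows "mpow A (2*k) = (- x\<^sup>2)^k *\<^sub>R mat 1 \<and> mpow A (2*k+1) = (- x\<^sup>2)^k *\<^sub>R A"
proof (induction k)
  case 0
  then show ?case by (simp add: mpow_Suc)
next
  case (Suc k)
  have "mpow A (2 * Suc k) = A ** (A ** mpow A (2*k))"
    by (simp add: mpow_Suc)
  then have even: "mpow A (2 * Suc k) = (- x\<^sup>2)^Suc k *\<^sub>R mat 1"
    using Suc.IH by (simp add: matrix_scalar_ac matrix_mul_assoc AA scalar_matrix_assoc[symmetric])
  have "mpow A (2 * Suc k + 1) = A ** mpow A (2 * Suc k)"
    by (simp add: mpow_Suc)
  with even show ?case
    by (simp add: matrix_scalar_ac matrix_mul_uminus_right)
qed

lemma exp_series_term_square_neg_scalar:
  assumes "A ** A = (- x\<^sup>2) *\<^sub>R mat 1"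
  shows "(1 / fact n) *\<^sub>R mpow A n = (cos_coeff n * x^n) *\<^sub>R mat 1 + (sin_coeff n * x^(n-1)) *\<^sub>R A"
proof -
  have sign: "(- x\<^sup>2)^k = (-1)^k * x^(2*k)" for k
    by (metis mult_minus1 power_mult power_mult_distrib)
  show ?thesis
  proof (cases "even n")
    case True
    then obtain k where "n = 2*k" by (auto elim: evenE)
    then show ?thesis using mpow_square_neg_scalar[OF assms, of k] sign[of k]
      by (simp add: cos_coeff_def sin_coeff_def)
  next
    case False
    then obtain k where "n = 2*k+1" by (auto elim: oddE)
    then show ?thesis using mpow_square_neg_scalar[OF assms, of k] sign[of k]
      by (simp add: cos_coeff_def sin_coeff_def)
  qed
qed

lemma sin_coeff_sums_sinc_fn: "(\<lambda>n. sin_coeff n * x^(n-1)) sums sinc_fn x"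
proof (cases "x = 0")
  case True
  then have "(\<lambda>n. sin_coeff n * x^(n-1)) = (\<lambda>n. if n = 1 then 1 else 0)"
    by (auto simp: sin_coeff_def fun_eq_iff elim!: oddE)
  then show ?thesis using sums_single[of 1 "\<lambda>_. 1::real"] True by simp
next
  case False
  have "(\<lambda>n. sin_coeff n * x^n / x) = (\<lambda>n. sin_coeff n * x^(n-1))"
  proof
    fix n show "sin_coeff n * x^n / x = sin_coeff n * x^(n-1)"
      using False by (cases n) (auto simp: sin_coeff_def)
  qed
  with sums_divide[OF sin_converges[of x], of x] False show ?thesis
    by (simp add: sinc_fn_def)
qed

lemma mexp_square_neg_scalar:
  assumes "A ** A = (- x\<^sup>2) *\<^sub>R mat 1"
  shows "mexp A = cos x *\<^sub>R mat 1 + sinc_fn x *\<^sub>R A"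
proof -
  have "(\<lambda>n. (cos_coeff n * x^n) *\<^sub>R mat 1 + (sin_coeff n * x^(n-1)) *\<^sub>R A)
          sums (cos x *\<^sub>R mat 1 + sinc_fn x *\<^sub>R A)"
    using cos_converges[of x] sin_coeff_sums_sinc_fn[of x]
    by (intro sums_add sums_scaleR_left) simp_all
  then have "(\<lambda>n. (1 / fact n) *\<^sub>R mpow A n) sums (cos x *\<^sub>R mat 1 + sinc_fn x *\<^sub>R A)"
    by (simp add: exp_series_term_square_neg_scalar[OF assms])
  then show ?thesis unfolding mexp_def by (rule sums_unique[symmetric])
qed

section \<open>Conjugation by the exponential of a Pauli field\<close>

definition pauli_field :: "real \<Rightarrow> real \<Rightarrow> qmat" where
  "pauli_field a b = a *\<^sub>R sigma_z + b *\<^sub>R sigma_x"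

definition conj_z :: "qmat \<Rightarrow> qmat" where
  "conj_z \<rho> = sigma_z ** \<rho> ** sigma_z"

definition conj_x :: "qmat \<Rightarrow> qmat" where
  "conj_x \<rho> = sigma_x ** \<rho> ** sigma_x"

definition conj_zx :: "qmat \<Rightarrow> qmat" where
  "conj_zx \<rho> = sigma_z ** \<rho> ** sigma_x + sigma_x ** \<rho> ** sigma_z"

definition comm_z :: "qmat \<Rightarrow> qmat" where
  "comm_z \<rho> = cscale (- \<i>) (sigma_z ** \<rho> - \<rho> ** sigma_z)"

definition comm_x :: "qmat \<Rightarrow> qmat" where
  "comm_x \<rho> = cscale (- \<i>) (sigma_x ** \<rho> - \<rho> ** sigma_x)"

definition phase :: "real \<Rightarrow> real \<Rightarrow> real \<Rightarrow> real" where
  "phase t a b = t * sqrt (a\<^sup>2 + b\<^sup>2) / 2"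

definition cos_sq :: "real \<Rightarrow> real \<Rightarrow> real \<Rightarrow> real" where
  "cos_sq t a b = (cos (phase t a b))\<^sup>2"

definition cos_sinc :: "real \<Rightarrow> real \<Rightarrow> real \<Rightarrow> real" where
  "cos_sinc t a b = t / 2 * cos (phase t a b) * sinc_fn (phase t a b)"

definition sinc_sq :: "real \<Rightarrow> real \<Rightarrow> real \<Rightarrow> real" where
  "sinc_sq t a b = (t / 2 * sinc_fn (phase t a b))\<^sup>2"

lemma scaleR_complex: "r *\<^sub>R (z::complex) = complex_of_real r * z"
  by (simp add: scaleR_conv_of_real)

lemmas qmat_simps = vec_eq_iff forall_2 matrix_matrix_mult_def sum_2 mat_def cscale_def
  sigma_z_def sigma_x_def pauli_field_def vector_scaleR_component scaleR_complex

lemma evolve_pauli_field: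
  "evolve ((1/2) *\<^sub>R pauli_field a b) t \<rho> =
     cos_sq t a b *\<^sub>R \<rho> + (cos_sinc t a b * a) *\<^sub>R comm_z \<rho> + (cos_sinc t a b * b) *\<^sub>R comm_x \<rho>
     + (sinc_sq t a b * a\<^sup>2) *\<^sub>R conj_z \<rho> + (sinc_sq t a b * b\<^sup>2) *\<^sub>R conj_x \<rho>
     + (sinc_sq t a b * (a * b)) *\<^sub>R conj_zx \<rho>"
proof -
  define M where "M = cscale (- \<i> * of_real t) ((1/2) *\<^sub>R pauli_field a b)"
  have "complex_of_real ((phase t a b)\<^sup>2) = complex_of_real (t\<^sup>2 * (a\<^sup>2 + b\<^sup>2) / 4)"
    by (simp add: phase_def power_mult_distrib power_divide)
  then have MM: "M ** M = (- (phase t a b)\<^sup>2) *\<^sub>R mat 1"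
    by (simp add: M_def qmat_simps; simp add: power2_eq_square field_simps; simp add: algebra_simps)
  have "(- M) ** (- M) = M ** M"
    by (simp add: matrix_matrix_mult_def vec_eq_iff sum_negf)
  then have MM': "(- M) ** (- M) = (- (phase t a b)\<^sup>2) *\<^sub>R mat 1"
    using MM by simp
  have "cscale (\<i> * of_real t) H = - cscale (- \<i> * of_real t) H" for H
    by (simp add: cscale_def vec_eq_iff)
  then have "evolve ((1/2) *\<^sub>R pauli_field a b) t \<rho> = mexp M ** \<rho> ** mexp (- M)"
    by (simp add: evolve_def M_def)
  also have "\<dots> = (cos (phase t a b) *\<^sub>R mat 1 + sinc_fn (phase t a b) *\<^sub>R M) ** \<rho>
                   ** (cos (phase t a b) *\<^sub>R mat 1 + sinc_fn (phase t a b) *\<^sub>R (- M))"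
    by (simp only: mexp_square_neg_scalar[OF MM] mexp_square_neg_scalar[OF MM'])
  finally show ?thesis
    unfolding M_def cos_sq_def cos_sinc_def sinc_sq_def comm_z_def comm_x_def conj_z_def
      conj_x_def conj_zx_def
    by (simp add: qmat_simps; simp add: power2_eq_square field_simps; algebra)
qed

section \<open>Maps that are diagonal in the Pauli basis\<close>

definition sigma_y :: qmat where
  "sigma_y = (\<chi> i j. if i = j then 0 else (if i = 1 then - \<i> else \<i>))"

definition pauli_diag :: "real \<Rightarrow> real \<Rightarrow> real \<Rightarrow> qmat \<Rightarrow> qmat" where
  "pauli_diag a b c \<rho> = a *\<^sub>R \<rho> + b *\<^sub>R conj_z \<rho> + c *\<^sub>R conj_x \<rho>"

lemma pauli_diag_scaleR: "pauli_diag a b c (k *\<^sub>R \<rho>) = k *\<^sub>R pauli_diag a b c \<rho>"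
  by (simp add: pauli_diag_def conj_z_def conj_x_def matrix_scalar_ac scalar_matrix_assoc
      algebra_simps)

lemma pauli_diag_sigma_x: "pauli_diag a b c sigma_x = (a - b + c) *\<^sub>R sigma_x"
  and pauli_diag_sigma_y: "pauli_diag a b c sigma_y = (a - b - c) *\<^sub>R sigma_y"
  and pauli_diag_sigma_z: "pauli_diag a b c sigma_z = (a + b - c) *\<^sub>R sigma_z"
  by (simp_all add: pauli_diag_def conj_z_def conj_x_def sigma_y_def qmat_simps algebra_simps)

lemma sigma_nonzero: "sigma_x \<noteq> 0" "sigma_y \<noteq> 0" "sigma_z \<noteq> 0"
  by (auto simp: vec_eq_iff forall_2 sigma_x_def sigma_y_def sigma_z_def)

lemma pauli_diag_entries:
  "pauli_diag a b c \<rho> $ 1 $ 1 = of_real (a + b) * \<rho>$1$1 + of_real c * \<rho>$2$2"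
  "pauli_diag a b c \<rho> $ 2 $ 2 = of_real (a + b) * \<rho>$2$2 + of_real c * \<rho>$1$1"
  "pauli_diag a b c \<rho> $ 1 $ 2 = of_real (a - b) * \<rho>$1$2 + of_real c * \<rho>$2$1"
  "pauli_diag a b c \<rho> $ 2 $ 1 = of_real (a - b) * \<rho>$2$1 + of_real c * \<rho>$1$2"
  by (simp_all add: pauli_diag_def conj_z_def conj_x_def qmat_simps algebra_simps)

text \<open>On the diagonal and on the off-diagonal entries \<open>pauli_diag a b c\<close> acts as the symmetric
  \<open>2 \<times> 2\<close> matrices \<open>[p, c; c, p]\<close> with \<open>p = a + b\<close> and \<open>p = a - b\<close>, whose inverses are
  \<open>[p, -c; -c, p] / (p\<^sup>2 - c\<^sup>2)\<close>.\<close>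

definition pauli_diag_inv :: "real \<Rightarrow> real \<Rightarrow> real \<Rightarrow> qmat \<Rightarrow> qmat" where
  "pauli_diag_inv a b c \<rho> = (\<chi> i j.
     let p = complex_of_real (if i = j then a + b else a - b); r = complex_of_real c;
         flip = (\<lambda>k::2. if k = 1 then 2 else 1) in
     (p * \<rho>$i$j - r * \<rho>$flip i$flip j) / (p\<^sup>2 - r\<^sup>2))"

lemma pauli_diag_inv_entries:
  "pauli_diag_inv a b c \<rho> $ 1 $ 1 = (of_real (a + b) * \<rho>$1$1 - of_real c * \<rho>$2$2)
     / ((of_real (a + b))\<^sup>2 - (of_real c)\<^sup>2)"
  "pauli_diag_inv a b c \<rho> $ 2 $ 2 = (of_real (a + b) * \<rho>$2$2 - of_real c * \<rho>$1$1)
     / ((of_real (a + b))\<^sup>2 - (of_real c)\<^sup>2)"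
  "pauli_diag_inv a b c \<rho> $ 1 $ 2 = (of_real (a - b) * \<rho>$1$2 - of_real c * \<rho>$2$1)
     / ((of_real (a - b))\<^sup>2 - (of_real c)\<^sup>2)"
  "pauli_diag_inv a b c \<rho> $ 2 $ 1 = (of_real (a - b) * \<rho>$2$1 - of_real c * \<rho>$1$2)
     / ((of_real (a - b))\<^sup>2 - (of_real c)\<^sup>2)"
  by (simp_all add: pauli_diag_inv_def Let_def)

lemma inverse_sym_2x2:
  assumes "(p::complex)\<^sup>2 - r\<^sup>2 \<noteq> 0"
  shows "p * ((p*u - r*w) / (p\<^sup>2 - r\<^sup>2)) + r * ((p*w - r*u) / (p\<^sup>2 - r\<^sup>2)) = u"
    and "(p * (p*u + r*w) - r * (p*w + r*u)) / (p\<^sup>2 - r\<^sup>2) = u"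
proof -
  have "p*(p*u - r*w) + r*(p*w - r*u) = (p\<^sup>2 - r\<^sup>2) * u"
    and "p * (p*u + r*w) - r * (p*w + r*u) = (p\<^sup>2 - r\<^sup>2) * u"
    by (simp_all add: algebra_simps power2_eq_square)
  with assms show "p * ((p*u - r*w) / (p\<^sup>2 - r\<^sup>2)) + r * ((p*w - r*u) / (p\<^sup>2 - r\<^sup>2)) = u"
    and "(p * (p*u + r*w) - r * (p*w + r*u)) / (p\<^sup>2 - r\<^sup>2) = u"
    by (simp_all add: add_divide_distrib[symmetric])
qed

lemma bij_pauli_diag:
  assumes "a + b + c \<noteq> 0" "a + b - c \<noteq> 0" "a - b + c \<noteq> 0" "a - b - c \<noteq> 0"
  shows "bij (pauli_diag a b c)"
proof (rule o_bij[where g="pauli_diag_inv a b c"])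
  have det_nonzero: "(complex_of_real p)\<^sup>2 - (complex_of_real c)\<^sup>2 \<noteq> 0"
    if "p + c \<noteq> 0" "p - c \<noteq> 0" for p
  proof -
    have "p\<^sup>2 - c\<^sup>2 \<noteq> 0"
      using that by (simp add: power2_eq_square square_diff_square_factored)
    then show ?thesis
      by (metis of_real_diff of_real_eq_0_iff of_real_power)
  qed
  note det = det_nonzero[OF assms(1,2)] det_nonzero[OF assms(3,4)]
  show "pauli_diag_inv a b c \<circ> pauli_diag a b c = id"
    by (simp only: fun_eq_iff vec_eq_iff forall_2 o_apply id_apply pauli_diag_inv_entries
        pauli_diag_entries inverse_sym_2x2(2)[OF det(1)] inverse_sym_2x2(2)[OF det(2)] simp_thms)
  show "pauli_diag a b c \<circ> pauli_diag_inv a b c = id"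
    by (simp only: fun_eq_iff vec_eq_iff forall_2 o_apply id_apply pauli_diag_inv_entries
        pauli_diag_entries inverse_sym_2x2(1)[OF det(1)] inverse_sym_2x2(1)[OF det(2)] simp_thms)
qed

lemma generator_eigenvector:
  assumes eigen: "\<And>s k. \<Lambda> s (k *\<^sub>R v) = (k * l s) *\<^sub>R v"
    and bij: "bij (\<Lambda> t)" and nz: "l t \<noteq> 0" and deriv: "(l has_real_derivative l') (at t)"
  shows "generator \<Lambda> t v = (l' / l t) *\<^sub>R v"
proof -
  have "\<Lambda> t ((1 / l t) *\<^sub>R v) = v"
    using eigen[of t "1 / l t"] nz by simp
  then have "inv (\<Lambda> t) v = (1 / l t) *\<^sub>R v"
    by (rule inv_f_eq[OF bij_is_inj[OF bij]])
  then have "(\<lambda>s. \<Lambda> s (inv (\<Lambda> t) v)) = (\<lambda>s. (l s / l t) *\<^sub>R v)"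
    by (simp add: eigen)
  moreover have "((\<lambda>s. (l s / l t) *\<^sub>R v) has_vector_derivative (l' / l t) *\<^sub>R v) (at t)"
    using deriv nz
    by (auto intro!: derivative_eq_intros simp: has_real_derivative_iff_has_vector_derivative)
  ultimately show ?thesis
    unfolding generator_def by (simp add: vector_derivative_at)
qed

context
  fixes \<alpha> \<beta> \<gamma> :: "real \<Rightarrow> real" and \<alpha>' \<beta>' \<gamma>' t :: real
  assumes \<alpha>: "(\<alpha> has_real_derivative \<alpha>') (at t)"
    and \<beta>: "(\<beta> has_real_derivative \<beta>') (at t)"
    and \<gamma>: "(\<gamma> has_real_derivative \<gamma>') (at t)"
    and eigenvalues_nonzero: "\<alpha> t + \<beta> t + \<gamma> t \<noteq> 0" "\<alpha> t + \<beta> t - \<gamma> t \<noteq> 0"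
      "\<alpha> t - \<beta> t + \<gamma> t \<noteq> 0" "\<alpha> t - \<beta> t - \<gamma> t \<noteq> 0"
begin

lemma regular_pauli_diag: "regular_at (\<lambda>s. pauli_diag (\<alpha> s) (\<beta> s) (\<gamma> s)) t"
proof -
  have "((\<lambda>s. pauli_diag (\<alpha> s) (\<beta> s) (\<gamma> s) \<rho>) has_vector_derivative pauli_diag \<alpha>' \<beta>' \<gamma>' \<rho>)
      (at t)" for \<rho>
    unfolding pauli_diag_def using \<alpha> \<beta> \<gamma>
    by (auto intro!: derivative_eq_intros simp: has_real_derivative_iff_has_vector_derivative)
  then show ?thesis
    using bij_pauli_diag[OF eigenvalues_nonzero]
    by (auto simp: regular_at_def differentiable_def has_vector_derivative_def)
qed

lemma generator_pauli_diag:
  "generator (\<lambda>s. pauli_diag (\<alpha> s) (\<beta> s) (\<gamma> s)) t sigma_x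
     = ((\<alpha>' - \<beta>' + \<gamma>') / (\<alpha> t - \<beta> t + \<gamma> t)) *\<^sub>R sigma_x"
  "generator (\<lambda>s. pauli_diag (\<alpha> s) (\<beta> s) (\<gamma> s)) t sigma_y
     = ((\<alpha>' - \<beta>' - \<gamma>') / (\<alpha> t - \<beta> t - \<gamma> t)) *\<^sub>R sigma_y"
  "generator (\<lambda>s. pauli_diag (\<alpha> s) (\<beta> s) (\<gamma> s)) t sigma_z
     = ((\<alpha>' + \<beta>' - \<gamma>') / (\<alpha> t + \<beta> t - \<gamma> t)) *\<^sub>R sigma_z"
  using bij_pauli_diag[OF eigenvalues_nonzero] eigenvalues_nonzero \<alpha> \<beta> \<gamma>
  by (auto intro!: generator_eigenvector derivative_eq_intros
      simp: pauli_diag_scaleR pauli_diag_sigma_x pauli_diag_sigma_y pauli_diag_sigma_z)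

end

section \<open>Averages over two independent standard Gaussians\<close>

lemma gauss_1: "gauss 1 = std_normal_density"
  by (simp add: gauss_def std_normal_density_def fun_eq_iff)

lemma integral_lborel_odd_eq_0:
  fixes f :: "real \<Rightarrow> real"
  assumes [measurable]: "f \<in> borel_measurable borel" and odd: "\<And>x. f (- x) = - f x"
  shows "(LINT x|lborel. f x) = 0"
proof -
  have "(LINT x|lborel. f x) = (LINT x|distr lborel borel uminus. f x)"
    by (simp add: lborel_distr_uminus)
  also have "\<dots> = (LINT x|lborel. f (- x))"
    by (rule integral_distr) auto
  also have "\<dots> = - (LINT x|lborel. f x)"
    by (simp add: odd)
  finally show ?thesis by simp
qed

definition avg2 :: "(real \<Rightarrow> real \<Rightarrow> real) \<Rightarrow> real" where
  "avg2 w = (LINT x|lborel. LINT y|lborel. std_normal_density x * std_normal_density y * w x y)"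

definition poly_bounded :: "(real \<Rightarrow> real \<Rightarrow> real) \<Rightarrow> bool" where
  "poly_bounded w \<longleftrightarrow> (\<lambda>p. w (fst p) (snd p)) \<in> borel_measurable borel
     \<and> (\<exists>C. \<forall>x y. \<bar>w x y\<bar> \<le> C * (1 + x^4 + y^4))"

lemma borel_measurable_poly_bounded_pair:
  "poly_bounded w \<Longrightarrow> (\<lambda>(x, y). w x y) \<in> borel_measurable (lborel \<Otimes>\<^sub>M lborel)"
  by (simp add: poly_bounded_def lborel_prod case_prod_beta')

lemma borel_measurable_poly_bounded:
  assumes "poly_bounded w"
  shows "w x \<in> borel_measurable borel"
proof -
  have "(\<lambda>p. w (fst p) (snd p)) \<in> borel_measurable borel"
    using assms by (simp add: poly_bounded_def)
  then have "(\<lambda>y. (\<lambda>p. w (fst p) (snd p)) (x, y)) \<in> borel_measurable borel"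
    by (rule measurable_compose[rotated]) (intro borel_measurable_continuous_onI continuous_intros)
  then show ?thesis by simp
qed

lemma abs_std_normal_product_le:
  assumes "\<bar>v\<bar> \<le> C * (1 + x^4 + y^4)"
  shows "\<bar>std_normal_density x * std_normal_density y * v\<bar>
    \<le> std_normal_density x * C * (1 + x^4) * std_normal_density y
       + std_normal_density x * C * (std_normal_density y * y^4)"
proof -
  have "\<bar>std_normal_density x * std_normal_density y * v\<bar>
      = std_normal_density x * std_normal_density y * \<bar>v\<bar>"
    by (simp add: abs_mult)
  also have "\<dots> \<le> std_normal_density x * std_normal_density y * (C * (1 + x^4 + y^4))"
    using assms by (intro mult_left_mono) auto
  finally show ?thesis by (simp add: algebra_simps)
qed

lemma integrable_std_normal_product_majorant:
  "integrable lborel (\<lambda>y. std_normal_density x * C * (1 + x^4) * std_normal_density y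
     + std_normal_density x * C * (std_normal_density y * y^4))"
  using integrable_std_normal_moment[of 4] by auto

lemma integral_std_normal_product_majorant:
  "(LINT y|lborel. std_normal_density x * C * (1 + x^4) * std_normal_density y
     + std_normal_density x * C * (std_normal_density y * y^4))
   = std_normal_density x * C * (4 + x^4)"
proof -
  have "(LINT y|lborel. std_normal_density x * C * (1 + x^4) * std_normal_density y
     + std_normal_density x * C * (std_normal_density y * y^4))
     = std_normal_density x * C * (1 + x^4) * (LINT y|lborel. std_normal_density y)
       + std_normal_density x * C * (LINT y|lborel. std_normal_density y * y^4)"
    using integrable_std_normal_moment[of 4] by simp
  also have "\<dots> = std_normal_density x * C * (4 + x^4)"
    using integral_std_normal_moment_even[of 2] by (simp add: fact_numeral algebra_simps)
  finally show ?thesis .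
qed

lemma integrable_std_normal_quartic: "integrable lborel (\<lambda>x. std_normal_density x * C * (4 + x^4))"
proof -
  have "(\<lambda>x. std_normal_density x * C * (4 + x^4))
      = (\<lambda>x. 4 * C * std_normal_density x + C * (std_normal_density x * x^4))"
    by (auto simp: algebra_simps)
  then show ?thesis using integrable_std_normal_moment[of 4] by auto
qed

lemma integrable_avg2_inner:
  assumes "poly_bounded w"
  shows "integrable lborel (\<lambda>y. std_normal_density x * std_normal_density y * w x y)"
proof -
  obtain C where C: "\<And>x y. \<bar>w x y\<bar> \<le> C * (1 + x^4 + y^4)"
    using assms by (auto simp: poly_bounded_def)
  have [measurable]: "w x \<in> borel_measurable borel"
    by (rule borel_measurable_poly_bounded[OF assms])
  show ?thesis
  proof (rule Bochner_Integration.integrable_bound[OF integrable_std_normal_product_majorant[of x C]])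
    show "(\<lambda>y. std_normal_density x * std_normal_density y * w x y) \<in> borel_measurable lborel"
      by measurable
  qed (intro AE_I2, use abs_std_normal_product_le[OF C] in \<open>auto intro: order_trans[OF _ abs_ge_self]\<close>)
qed

lemma borel_measurable_avg2_inner:
  assumes "poly_bounded w"
  shows "(\<lambda>x. LINT y|lborel. std_normal_density x * std_normal_density y * w x y)
           \<in> borel_measurable borel"
proof -
  have [measurable]: "(\<lambda>(x, y). w x y) \<in> borel_measurable (lborel \<Otimes>\<^sub>M lborel)"
    by (rule borel_measurable_poly_bounded_pair[OF assms])
  have "(\<lambda>x. LINT y|lborel. std_normal_density x * std_normal_density y * w x y)
          \<in> borel_measurable lborel"
    by measurable
  then show ?thesis by simp
qed

lemma abs_avg2_inner_le:
  assumes "poly_bounded w" "\<And>x y. \<bar>w x y\<bar> \<le> C * (1 + x^4 + y^4)"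
  shows "\<bar>LINT y|lborel. std_normal_density x * std_normal_density y * w x y\<bar>
           \<le> std_normal_density x * C * (4 + x^4)"
  unfolding integral_std_normal_product_majorant[symmetric]
  by (rule integral_abs_bound_integral[OF integrable_avg2_inner[OF assms(1)]
        integrable_std_normal_product_majorant abs_std_normal_product_le[OF assms(2)]])

lemma integrable_avg2_outer:
  assumes "poly_bounded w"
  shows "integrable lborel (\<lambda>x. LINT y|lborel. std_normal_density x * std_normal_density y * w x y)"
proof -
  obtain C where C: "\<And>x y. \<bar>w x y\<bar> \<le> C * (1 + x^4 + y^4)"
    using assms by (auto simp: poly_bounded_def)
  show ?thesis
    by (rule Bochner_Integration.integrable_bound[OF integrable_std_normal_quartic[of C]])
      (use borel_measurable_avg2_inner[OF assms] abs_avg2_inner_le[OF assms C] in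
        \<open>auto intro!: AE_I2 intro: order_trans[OF _ abs_ge_self]\<close>)
qed

lemma avg2_add:
  assumes u: "poly_bounded u" and v: "poly_bounded v"
  shows "avg2 (\<lambda>x y. u x y + v x y) = avg2 u + avg2 v"
proof -
  have "(LINT y|lborel. std_normal_density x * std_normal_density y * (u x y + v x y)) =
        (LINT y|lborel. std_normal_density x * std_normal_density y * u x y)
        + (LINT y|lborel. std_normal_density x * std_normal_density y * v x y)" for x
    using integrable_avg2_inner[OF u, of x] integrable_avg2_inner[OF v, of x]
    by (simp add: distrib_left)
  then show ?thesis
    using integrable_avg2_outer[OF u] integrable_avg2_outer[OF v] by (simp add: avg2_def)
qed

lemma avg2_cmult: "avg2 (\<lambda>x y. c * u x y) = c * avg2 u"
  by (simp add: avg2_def mult_ac)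

lemma avg2_mono:
  assumes u: "poly_bounded u" and v: "poly_bounded v" and le: "\<And>x y. u x y \<le> v x y"
  shows "avg2 u \<le> avg2 v"
  unfolding avg2_def
proof (rule integral_mono[OF integrable_avg2_outer[OF u] integrable_avg2_outer[OF v]])
  fix x
  show "(LINT y|lborel. std_normal_density x * std_normal_density y * u x y)
     \<le> (LINT y|lborel. std_normal_density x * std_normal_density y * v x y)"
    by (rule integral_mono[OF integrable_avg2_inner[OF u] integrable_avg2_inner[OF v]])
      (simp add: le mult_left_mono)
qed

lemma avg2_product:
  "avg2 (\<lambda>x y. p x * q y)
     = (LINT x|lborel. std_normal_density x * p x) * (LINT y|lborel. std_normal_density y * q y)"
proof -
  have "(LINT y|lborel. std_normal_density x * std_normal_density y * (p x * q y))
      = (std_normal_density x * p x) * (LINT y|lborel. std_normal_density y * q y)" for x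
  proof -
    have "(LINT y|lborel. std_normal_density x * std_normal_density y * (p x * q y))
        = (LINT y|lborel. (std_normal_density x * p x) * (std_normal_density y * q y))"
      by (simp add: mult_ac)
    then show ?thesis by simp
  qed
  then show ?thesis by (simp add: avg2_def)
qed

lemma avg2_odd_fst:
  assumes "poly_bounded w" "\<And>x y. w (- x) y = - w x y"
  shows "avg2 w = 0"
  unfolding avg2_def
  by (rule integral_lborel_odd_eq_0[OF borel_measurable_avg2_inner[OF assms(1)]])
    (simp add: assms(2) std_normal_density_def)

lemma avg2_odd_snd:
  assumes "poly_bounded w" "\<And>x y. w x (- y) = - w x y"
  shows "avg2 w = 0"
proof -
  have "(LINT y|lborel. std_normal_density x * std_normal_density y * w x y) = 0" for x
  proof (rule integral_lborel_odd_eq_0)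
    have [measurable]: "w x \<in> borel_measurable borel"
      by (rule borel_measurable_poly_bounded[OF assms(1)])
    show "(\<lambda>y. std_normal_density x * std_normal_density y * w x y) \<in> borel_measurable borel"
      by measurable
  qed (simp add: assms(2) std_normal_density_def)
  then show ?thesis by (simp add: avg2_def)
qed

lemma avg2_1 [simp]: "avg2 (\<lambda>x y. 1) = 1"
  using avg2_product[of "\<lambda>x. 1" "\<lambda>y. 1"] by simp

lemma avg2_fst_sq [simp]: "avg2 (\<lambda>x y. x\<^sup>2) = 1"
  and avg2_snd_sq [simp]: "avg2 (\<lambda>x y. y\<^sup>2) = 1"
  and avg2_fst_pow4 [simp]: "avg2 (\<lambda>x y. x^4) = 3"
  and avg2_snd_pow4 [simp]: "avg2 (\<lambda>x y. y^4) = 3"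
  using avg2_product[of "\<lambda>x. x\<^sup>2" "\<lambda>y. 1"] avg2_product[of "\<lambda>x. 1" "\<lambda>y. y\<^sup>2"]
    avg2_product[of "\<lambda>x. x^4" "\<lambda>y. 1"] avg2_product[of "\<lambda>x. 1" "\<lambda>y. y^4"]
    integral_std_normal_moment_even[of 1] integral_std_normal_moment_even[of 2]
  by (simp_all add: fact_numeral)

lemma poly_boundedI:
  assumes "(\<lambda>p. w (fst p) (snd p)) \<in> borel_measurable borel" "\<And>x y. \<bar>w x y\<bar> \<le> C * (1 + x^4 + y^4)"
  shows "poly_bounded w"
  using assms unfolding poly_bounded_def by blast

lemma quadratic_le_quartic: "1 + x\<^sup>2 + y\<^sup>2 \<le> 2 * (1 + x^4 + (y::real)^4)"
proof -
  have sq: "x\<^sup>2 \<le> (1 + x^4) / 2" for x :: real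
  proof -
    have "0 \<le> (x\<^sup>2 - 1)\<^sup>2" by simp
    then show ?thesis by (simp add: power2_diff power_mult[symmetric] field_simps)
  qed
  have "a \<le> (1 + c) / 2 \<Longrightarrow> b \<le> (1 + d) / 2 \<Longrightarrow> 0 \<le> c \<Longrightarrow> 0 \<le> d
      \<Longrightarrow> 1 + a + b \<le> 2 * (1 + c + d)" for a b c d :: real
    by (simp add: field_simps)
  from this[OF sq[of x] sq[of y]] show ?thesis
    by simp
qed

lemma poly_bounded_quadraticI:
  assumes "(\<lambda>p. w (fst p) (snd p)) \<in> borel_measurable borel" "\<And>x y. \<bar>w x y\<bar> \<le> C * (1 + x\<^sup>2 + y\<^sup>2)"
  shows "poly_bounded w"
proof (rule poly_boundedI[OF assms(1)])
  fix x y
  have "\<bar>w x y\<bar> \<le> \<bar>C\<bar> * (1 + x\<^sup>2 + y\<^sup>2)"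
    using assms(2)[of x y] by (smt (verit) mult_right_mono zero_le_power2)
  also have "\<dots> \<le> \<bar>C\<bar> * (2 * (1 + x^4 + y^4))"
    by (intro mult_left_mono quadratic_le_quartic) auto
  finally show "\<bar>w x y\<bar> \<le> (2 * \<bar>C\<bar>) * (1 + x^4 + y^4)"
    by (simp add: algebra_simps)
qed

lemma poly_bounded_add:
  assumes "poly_bounded u" "poly_bounded v"
  shows "poly_bounded (\<lambda>x y. u x y + v x y)"
proof -
  obtain C1 where C1: "\<And>x y. \<bar>u x y\<bar> \<le> C1 * (1 + x^4 + y^4)"
    using assms(1) by (auto simp: poly_bounded_def)
  obtain C2 where C2: "\<And>x y. \<bar>v x y\<bar> \<le> C2 * (1 + x^4 + y^4)"
    using assms(2) by (auto simp: poly_bounded_def)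
  have [measurable]: "(\<lambda>p. u (fst p) (snd p)) \<in> borel_measurable borel"
    "(\<lambda>p. v (fst p) (snd p)) \<in> borel_measurable borel"
    using assms by (simp_all add: poly_bounded_def)
  show ?thesis
  proof (rule poly_boundedI[where C="C1 + C2"])
    fix x y
    show "\<bar>u x y + v x y\<bar> \<le> (C1 + C2) * (1 + x^4 + y^4)"
      using abs_triangle_ineq[of "u x y" "v x y"] C1[of x y] C2[of x y] by (simp add: algebra_simps)
  qed measurable
qed

lemma poly_bounded_bounded_mult:
  assumes [measurable]: "(\<lambda>p. c (fst p) (snd p)) \<in> borel_measurable borel"
    and c: "\<And>x y. \<bar>c x y\<bar> \<le> K" and m: "poly_bounded m"
  shows "poly_bounded (\<lambda>x y. c x y * m x y)"
proof -
  obtain C where C: "\<And>x y. \<bar>m x y\<bar> \<le> C * (1 + x^4 + y^4)"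
    using m by (auto simp: poly_bounded_def)
  have [measurable]: "(\<lambda>p. m (fst p) (snd p)) \<in> borel_measurable borel"
    using m by (simp add: poly_bounded_def)
  have "0 \<le> K"
    using c[of 0 0] by linarith
  show ?thesis
  proof (rule poly_boundedI[where C="K * C"])
    fix x y
    have "\<bar>c x y * m x y\<bar> \<le> K * (C * (1 + x^4 + y^4))"
      unfolding abs_mult using c C \<open>0 \<le> K\<close> by (intro mult_mono) auto
    then show "\<bar>c x y * m x y\<bar> \<le> K * C * (1 + x^4 + y^4)"
      by (simp add: mult.assoc)
  qed measurable
qed

lemma poly_bounded_cmult: "poly_bounded m \<Longrightarrow> poly_bounded (\<lambda>x y. c * m x y)"
  by (rule poly_bounded_bounded_mult[where K="\<bar>c\<bar>"]) auto

lemma abs_le_1_plus_sq: "\<bar>x::real\<bar> \<le> 1 + x\<^sup>2"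
  using zero_le_power2[of "\<bar>x\<bar> - 1"] by (simp add: power2_diff)

lemma poly_bounded_monomials:
  "poly_bounded (\<lambda>x y. 1)" "poly_bounded (\<lambda>x y. x)" "poly_bounded (\<lambda>x y. y)"
  "poly_bounded (\<lambda>x y. x\<^sup>2)" "poly_bounded (\<lambda>x y. y\<^sup>2)" "poly_bounded (\<lambda>x y. x * y)"
  "poly_bounded (\<lambda>x y. x^4)" "poly_bounded (\<lambda>x y. y^4)"
proof -
  have m: "(\<lambda>p. f (fst p) (snd p)) \<in> borel_measurable borel"
    if "(\<lambda>p. f (fst p) (snd p)) \<in> borel_measurable (borel \<Otimes>\<^sub>M borel)" for f :: "real \<Rightarrow> real \<Rightarrow> real"
    using that by (simp add: borel_prod)
  have q: "poly_bounded f" if "(\<lambda>p. f (fst p) (snd p)) \<in> borel_measurable (borel \<Otimes>\<^sub>M borel)"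
    "\<And>x y. \<bar>f x y\<bar> \<le> 1 + x\<^sup>2 + y\<^sup>2" for f
    using poly_bounded_quadraticI[OF m[OF that(1)], of 1] that(2) by simp
  have p4: "poly_bounded f" if "(\<lambda>p. f (fst p) (snd p)) \<in> borel_measurable (borel \<Otimes>\<^sub>M borel)"
    "\<And>x y. \<bar>f x y\<bar> \<le> 1 + x^4 + y^4" for f
    using poly_boundedI[OF m[OF that(1)], of 1] that(2) by simp
  have xy: "\<bar>x * y\<bar> \<le> 1 + x\<^sup>2 + y\<^sup>2" for x y :: real
  proof -
    have "2 * (\<bar>x\<bar> * \<bar>y\<bar>) \<le> x\<^sup>2 + y\<^sup>2"
      using zero_le_power2[of "\<bar>x\<bar> - \<bar>y\<bar>"] by (simp add: power2_diff mult.assoc)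
    moreover have "0 \<le> \<bar>x\<bar> * \<bar>y\<bar>"
      by simp
    ultimately show ?thesis
      unfolding abs_mult by linarith
  qed
  show "poly_bounded (\<lambda>x y. 1)" "poly_bounded (\<lambda>x y. x)" "poly_bounded (\<lambda>x y. y)"
    "poly_bounded (\<lambda>x y. x\<^sup>2)" "poly_bounded (\<lambda>x y. y\<^sup>2)" "poly_bounded (\<lambda>x y. x * y)"
    using abs_le_1_plus_sq xy by (auto intro!: q intro: order_trans[OF abs_le_1_plus_sq])
  show "poly_bounded (\<lambda>x y. x^4)" "poly_bounded (\<lambda>x y. y^4)"
    by (auto intro!: p4)
qed

definition avg2_vec :: "(real \<Rightarrow> real \<Rightarrow> qmat) \<Rightarrow> qmat" where
  "avg2_vec F = (LINT x|lborel. LINT y|lborel. (std_normal_density x * std_normal_density y) *\<^sub>R F x y)"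

definition avg2_integrable :: "(real \<Rightarrow> real \<Rightarrow> qmat) \<Rightarrow> bool" where
  "avg2_integrable F \<longleftrightarrow>
     (\<forall>x. integrable lborel (\<lambda>y. (std_normal_density x * std_normal_density y) *\<^sub>R F x y))
     \<and> integrable lborel
         (\<lambda>x. LINT y|lborel. (std_normal_density x * std_normal_density y) *\<^sub>R F x y)"

lemma avg2_integrable_scaleR:
  assumes "poly_bounded w"
  shows "avg2_integrable (\<lambda>x y. w x y *\<^sub>R B)"
  using integrable_avg2_inner[OF assms] integrable_avg2_outer[OF assms]
  by (simp add: avg2_integrable_def integrable_scaleR_left)

lemma avg2_vec_scaleR:
  assumes "poly_bounded w"
  shows "avg2_vec (\<lambda>x y. w x y *\<^sub>R B) = avg2 w *\<^sub>R B"
  using integrable_avg2_inner[OF assms] integrable_avg2_outer[OF assms]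
  by (simp add: avg2_vec_def avg2_def)

lemma avg2_integrable_add:
  assumes "avg2_integrable F" "avg2_integrable G"
  shows "avg2_integrable (\<lambda>x y. F x y + G x y)"
  using assms by (simp add: avg2_integrable_def scaleR_add_right)

lemma avg2_vec_add:
  assumes "avg2_integrable F" "avg2_integrable G"
  shows "avg2_vec (\<lambda>x y. F x y + G x y) = avg2_vec F + avg2_vec G"
  using assms by (simp add: avg2_integrable_def avg2_vec_def scaleR_add_right)

section \<open>The dynamics with both magnets\<close>

lemma phase_minus [simp]: "phase t (- a) b = phase t a b" "phase t a (- b) = phase t a b"
  by (simp_all add: phase_def)

lemma borel_measurable_phase [measurable]:
  "(\<lambda>p. phase t (fst p) (snd p)) \<in> borel_measurable (borel \<Otimes>\<^sub>M borel)"
  unfolding phase_def by measurable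

lemma borel_measurable_coefficients:
  "(\<lambda>p. cos_sq t (fst p) (snd p)) \<in> borel_measurable borel"
  "(\<lambda>p. cos_sinc t (fst p) (snd p)) \<in> borel_measurable borel"
  "(\<lambda>p. sinc_sq t (fst p) (snd p)) \<in> borel_measurable borel"
  unfolding cos_sq_def cos_sinc_def sinc_sq_def borel_prod[symmetric] by measurable

lemma abs_cos_sq_le: "\<bar>cos_sq t a b\<bar> \<le> 1"
  by (simp add: cos_sq_def abs_square_le_1)

lemma abs_cos_sinc_le: "\<bar>cos_sinc t a b\<bar> \<le> \<bar>t\<bar> / 2"
proof -
  have "\<bar>cos (phase t a b)\<bar> * \<bar>sinc_fn (phase t a b)\<bar> \<le> 1"
    by (intro mult_le_one) (auto simp: abs_sinc_fn_le_1)
  then have "\<bar>t\<bar> / 2 * (\<bar>cos (phase t a b)\<bar> * \<bar>sinc_fn (phase t a b)\<bar>) \<le> \<bar>t\<bar> / 2 * 1"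
    by (rule mult_left_mono) simp
  then show ?thesis
    by (simp add: cos_sinc_def abs_mult mult.assoc)
qed

lemma coefficients_minus [simp]:
  "cos_sinc t (- a) b = cos_sinc t a b" "cos_sinc t a (- b) = cos_sinc t a b"
  "sinc_sq t (- a) b = sinc_sq t a b" "sinc_sq t a (- b) = sinc_sq t a b"
  by (simp_all add: cos_sinc_def sinc_sq_def)

lemma sinc_sq_le: "sinc_sq t a b \<le> t\<^sup>2 / 4"
proof -
  have "(sinc_fn (phase t a b))\<^sup>2 \<le> 1"
    using abs_sinc_fn_le_1 by (simp add: abs_square_le_1)
  then show ?thesis
    unfolding sinc_sq_def power_mult_distrib using mult_left_mono[of _ 1 "(t / 2)\<^sup>2"]
    by (simp add: power_divide)
qed

lemma abs_sinc_sq_le: "\<bar>sinc_sq t a b\<bar> \<le> t\<^sup>2 / 4"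
  using sinc_sq_le by (simp add: sinc_sq_def)

lemma poly_bounded_coefficient_mult:
  assumes "poly_bounded m"
  shows "poly_bounded (\<lambda>x y. cos_sq t x y * m x y)"
    "poly_bounded (\<lambda>x y. cos_sinc t x y * m x y)"
    "poly_bounded (\<lambda>x y. sinc_sq t x y * m x y)"
  by (rule poly_bounded_bounded_mult[OF borel_measurable_coefficients(1) abs_cos_sq_le assms]
        poly_bounded_bounded_mult[OF borel_measurable_coefficients(2) abs_cos_sinc_le assms]
        poly_bounded_bounded_mult[OF borel_measurable_coefficients(3) abs_sinc_sq_le assms])+

lemma sinc_sq_sum_eq_sin_sq: "sinc_sq t a b * a\<^sup>2 + sinc_sq t a b * b\<^sup>2 = (sin (phase t a b))\<^sup>2"
proof -
  have "(phase t a b)\<^sup>2 = (t / 2)\<^sup>2 * (a\<^sup>2 + b\<^sup>2)"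
    by (simp add: phase_def power_mult_distrib power_divide)
  then have "sinc_sq t a b * a\<^sup>2 + sinc_sq t a b * b\<^sup>2 = (sinc_fn (phase t a b))\<^sup>2 * (phase t a b)\<^sup>2"
    by (simp add: sinc_sq_def power_mult_distrib power_divide algebra_simps)
  also have "\<dots> = (sin (phase t a b))\<^sup>2"
    by (simp add: power_mult_distrib[symmetric] mult.commute mult_sinc_fn)
  finally show ?thesis .
qed

definition weight_z :: "real \<Rightarrow> real" where
  "weight_z t = avg2 (\<lambda>x y. sinc_sq t x y * x\<^sup>2)"

definition weight_x :: "real \<Rightarrow> real" where
  "weight_x t = avg2 (\<lambda>x y. sinc_sq t x y * y\<^sup>2)"

lemma poly_bounded_cos_sq: "poly_bounded (cos_sq t)"
  using poly_bounded_coefficient_mult(1)[OF poly_bounded_monomials(1)] by simp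

lemma avg2_cos_sq: "avg2 (cos_sq t) = 1 - weight_z t - weight_x t"
proof -
  note pb = poly_bounded_coefficient_mult(3)[OF poly_bounded_monomials(4)]
    poly_bounded_coefficient_mult(3)[OF poly_bounded_monomials(5)]
  have "avg2 (cos_sq t) + (weight_z t + weight_x t)
      = avg2 (\<lambda>x y. cos_sq t x y + (sinc_sq t x y * x\<^sup>2 + sinc_sq t x y * y\<^sup>2))"
    unfolding weight_z_def weight_x_def
    by (simp add: avg2_add pb poly_bounded_add poly_bounded_cos_sq)
  also have "\<dots> = avg2 (\<lambda>x y. 1)"
    by (simp add: sinc_sq_sum_eq_sin_sq cos_sq_def)
  finally show ?thesis by simp
qed

lemma Lam12_eq:
  "Lam12 1 1 1 1 t = pauli_diag (1 - weight_z t - weight_x t) (weight_z t) (weight_x t)"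
proof
  fix \<rho>
  note pb = poly_bounded_coefficient_mult[OF poly_bounded_monomials(1)]
    poly_bounded_coefficient_mult[OF poly_bounded_monomials(2)]
    poly_bounded_coefficient_mult[OF poly_bounded_monomials(3)]
    poly_bounded_coefficient_mult[OF poly_bounded_monomials(4)]
    poly_bounded_coefficient_mult[OF poly_bounded_monomials(5)]
    poly_bounded_coefficient_mult[OF poly_bounded_monomials(6)]
  have odd: "avg2 (\<lambda>x y. cos_sinc t x y * x) = 0" "avg2 (\<lambda>x y. cos_sinc t x y * y) = 0"
    "avg2 (\<lambda>x y. sinc_sq t x y * (x * y)) = 0"
    by (rule avg2_odd_fst avg2_odd_snd; simp add: pb)+
  have "Lam12 1 1 1 1 t \<rho> = avg2_vec (\<lambda>x y. evolve ((1/2) *\<^sub>R pauli_field x y) t \<rho>)"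
    by (simp add: Lam12_def avg2_vec_def pauli_field_def gauss_1)
  also have "\<dots> = avg2 (cos_sq t) *\<^sub>R \<rho>
     + avg2 (\<lambda>x y. cos_sinc t x y * x) *\<^sub>R comm_z \<rho> + avg2 (\<lambda>x y. cos_sinc t x y * y) *\<^sub>R comm_x \<rho>
     + weight_z t *\<^sub>R conj_z \<rho> + weight_x t *\<^sub>R conj_x \<rho>
     + avg2 (\<lambda>x y. sinc_sq t x y * (x * y)) *\<^sub>R conj_zx \<rho>"
    using pb poly_bounded_cos_sq unfolding evolve_pauli_field weight_z_def weight_x_def
    by (simp add: avg2_vec_add avg2_integrable_add avg2_integrable_scaleR avg2_vec_scaleR)
  finally show "Lam12 1 1 1 1 t \<rho> = pauli_diag (1 - weight_z t - weight_x t) (weight_z t) (weight_x t) \<rho>"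
    by (simp add: odd avg2_cos_sq pauli_diag_def)
qed

section \<open>The dynamics with a single magnet\<close>

definition decay :: "real \<Rightarrow> real" where
  "decay t = exp (- t\<^sup>2 / 2)"

lemma integral_std_normal_cos: "(LINT x|lborel. std_normal_density x * cos (t * x)) = decay t"
proof -
  interpret std_normal: prob_space std_normal_distribution
    by (rule prob_space_normal_density) simp
  have "decay t = Re (char std_normal_distribution t)"
    by (simp add: char_std_normal_distribution decay_def)
  also have "\<dots> = (LINT x|std_normal_distribution. Re (iexp (t * x)))"
    unfolding char_def by (rule integral_Re[symmetric]) (rule std_normal.integrable_iexp, auto)
  also have "\<dots> = (LINT x|std_normal_distribution. cos (t * x))"
    by (simp add: Re_exp)
  also have "\<dots> = (LINT x|lborel. std_normal_density x * cos (t * x))"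
    by (subst integral_density) auto
  finally show ?thesis ..
qed

lemma integrable_std_normal_quadratic_bounded:
  assumes [measurable]: "w \<in> borel_measurable borel" and bound: "\<And>x. \<bar>w x\<bar> \<le> C * (1 + x\<^sup>2)"
  shows "integrable lborel (\<lambda>x. std_normal_density x * w x)"
proof (rule Bochner_Integration.integrable_bound)
  show "integrable lborel (\<lambda>x. C * std_normal_density x + C * (std_normal_density x * x^2))"
    using integrable_std_normal_moment[of 2] by auto
  show "AE x in lborel. norm (std_normal_density x * w x)
      \<le> norm (C * std_normal_density x + C * (std_normal_density x * x^2))"
  proof (rule AE_I2)
    fix x
    have "\<bar>std_normal_density x * w x\<bar> \<le> std_normal_density x * (C * (1 + x\<^sup>2))"
      unfolding abs_mult using bound by (simp add: mult_left_mono)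
    then show "norm (std_normal_density x * w x)
        \<le> norm (C * std_normal_density x + C * (std_normal_density x * x^2))"
      by (simp add: algebra_simps)
  qed
qed measurable

lemma integral_scaleR_sum3:
  fixes A B C :: "'b::{banach, second_countable_topology}"
  assumes "integrable M (\<lambda>m. f m * a m)" "integrable M (\<lambda>m. f m * b m)" "integrable M (\<lambda>m. f m * c m)"
  shows "(LINT m|M. f m *\<^sub>R (a m *\<^sub>R A + b m *\<^sub>R B + c m *\<^sub>R C)) =
    (LINT m|M. f m * a m) *\<^sub>R A + (LINT m|M. f m * b m) *\<^sub>R B + (LINT m|M. f m * c m) *\<^sub>R C"
proof -
  have "(\<lambda>m. f m *\<^sub>R (a m *\<^sub>R A + b m *\<^sub>R B + c m *\<^sub>R C))
      = (\<lambda>m. (f m * a m) *\<^sub>R A + (f m * b m) *\<^sub>R B + (f m * c m) *\<^sub>R C)"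
    by (simp add: fun_eq_iff scaleR_add_right)
  then show ?thesis
    using assms by (simp add: integrable_scaleR_left)
qed

lemma phase_axis: "phase t m 0 = t * \<bar>m\<bar> / 2" "phase t 0 m = t * \<bar>m\<bar> / 2"
  by (simp_all add: phase_def)

lemma cos_sq_axis: "cos_sq t m 0 = (1 + cos (t * m)) / 2" "cos_sq t 0 m = (1 + cos (t * m)) / 2"
proof -
  have "cos (t * m) = cos (t * \<bar>m\<bar>)"
    by (cases "m \<ge> 0") simp_all
  also have "\<dots> = 2 * (cos (t * \<bar>m\<bar> / 2))\<^sup>2 - 1"
    using cos_double_cos[of "t * \<bar>m\<bar> / 2"] by simp
  finally show "cos_sq t m 0 = (1 + cos (t * m)) / 2" "cos_sq t 0 m = (1 + cos (t * m)) / 2"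
    by (simp_all add: cos_sq_def phase_axis)
qed

lemma sinc_sq_axis:
  "sinc_sq t m 0 * m\<^sup>2 = (1 - cos (t * m)) / 2" "sinc_sq t 0 m * m\<^sup>2 = (1 - cos (t * m)) / 2"
  using sinc_sq_sum_eq_sin_sq[of t m 0] sinc_sq_sum_eq_sin_sq[of t 0 m] cos_sq_axis[of t m]
    sin_cos_squared_add[of "phase t m 0"] sin_cos_squared_add[of "phase t 0 m"]
  by (simp_all add: cos_sq_def sin_squared_eq)

lemma integrable_single_magnet_coefficients:
  "integrable lborel (\<lambda>m. std_normal_density m * ((1 + cos (t * m)) / 2))"
  "integrable lborel (\<lambda>m. std_normal_density m * ((1 - cos (t * m)) / 2))"
  "integrable lborel (\<lambda>m. std_normal_density m * (cos_sinc t m 0 * m))"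
  "integrable lborel (\<lambda>m. std_normal_density m * (cos_sinc t 0 m * m))"
  "integrable lborel (\<lambda>m. std_normal_density m * cos (t * m))"
proof -
  have "\<bar>(1 + cos (t * m)) / 2\<bar> \<le> 1" "\<bar>(1 - cos (t * m)) / 2\<bar> \<le> 1" "\<bar>cos (t * m)\<bar> \<le> 1" for m
    using cos_le_one[of "t * m"] cos_ge_minus_one[of "t * m"]
    by (auto simp: abs_le_iff simp del: cos_le_one cos_ge_minus_one)
  moreover have "(1::real) \<le> 1 * (1 + m\<^sup>2)" for m :: real
    by simp
  ultimately have bounds: "\<bar>(1 + cos (t * m)) / 2\<bar> \<le> 1 * (1 + m\<^sup>2)"
    "\<bar>(1 - cos (t * m)) / 2\<bar> \<le> 1 * (1 + m\<^sup>2)" "\<bar>cos (t * m)\<bar> \<le> 1 * (1 + m\<^sup>2)" for m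
    by (meson order_trans)+
  have bound_cos_sinc: "\<bar>cos_sinc t a b * m\<bar> \<le> \<bar>t\<bar> / 2 * (1 + m\<^sup>2)" for a b m
    unfolding abs_mult using abs_cos_sinc_le abs_le_1_plus_sq by (intro mult_mono) auto
  have measurable [measurable]: "(\<lambda>m. cos_sinc t m 0 * m) \<in> borel_measurable borel"
    "(\<lambda>m. cos_sinc t 0 m * m) \<in> borel_measurable borel"
    unfolding cos_sinc_def phase_def by measurable
  show "integrable lborel (\<lambda>m. std_normal_density m * ((1 + cos (t * m)) / 2))"
    "integrable lborel (\<lambda>m. std_normal_density m * ((1 - cos (t * m)) / 2))"
    "integrable lborel (\<lambda>m. std_normal_density m * (cos_sinc t m 0 * m))"
    "integrable lborel (\<lambda>m. std_normal_density m * (cos_sinc t 0 m * m))"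
    "integrable lborel (\<lambda>m. std_normal_density m * cos (t * m))"
    by (rule integrable_std_normal_quadratic_bounded[OF _ bounds(1)]
          integrable_std_normal_quadratic_bounded[OF _ bounds(2)]
          integrable_std_normal_quadratic_bounded[OF _ bound_cos_sinc]
          integrable_std_normal_quadratic_bounded[OF _ bound_cos_sinc]
          integrable_std_normal_quadratic_bounded[OF _ bounds(3)]; measurable)+
qed

lemma integral_single_magnet_coefficients:
  "(LINT m|lborel. std_normal_density m * ((1 + cos (t * m)) / 2)) = (1 + decay t) / 2"
  "(LINT m|lborel. std_normal_density m * ((1 - cos (t * m)) / 2)) = (1 - decay t) / 2"
  "(LINT m|lborel. std_normal_density m * (cos_sinc t m 0 * m)) = 0"
  "(LINT m|lborel. std_normal_density m * (cos_sinc t 0 m * m)) = 0"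
proof -
  note int_cos = integrable_single_magnet_coefficients(5)
  have "(LINT m|lborel. std_normal_density m * ((1 + cos (t * m)) / 2))
      = (LINT m|lborel. std_normal_density m / 2 + std_normal_density m * cos (t * m) / 2)"
    by (simp add: algebra_simps add_divide_distrib)
  also have "\<dots> = (1 + decay t) / 2"
    using int_cos by (simp add: integral_std_normal_cos add_divide_distrib)
  finally show "(LINT m|lborel. std_normal_density m * ((1 + cos (t * m)) / 2)) = (1 + decay t) / 2" .
  have "(LINT m|lborel. std_normal_density m * ((1 - cos (t * m)) / 2))
      = (LINT m|lborel. std_normal_density m / 2 - std_normal_density m * cos (t * m) / 2)"
    by (simp add: algebra_simps diff_divide_distrib)
  also have "\<dots> = (1 - decay t) / 2"
    using int_cos by (simp add: integral_std_normal_cos diff_divide_distrib)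
  finally show "(LINT m|lborel. std_normal_density m * ((1 - cos (t * m)) / 2)) = (1 - decay t) / 2" .
  have measurable: "(\<lambda>m. std_normal_density m * (cos_sinc t m 0 * m)) \<in> borel_measurable borel"
    "(\<lambda>m. std_normal_density m * (cos_sinc t 0 m * m)) \<in> borel_measurable borel"
    unfolding cos_sinc_def phase_def by measurable
  show "(LINT m|lborel. std_normal_density m * (cos_sinc t m 0 * m)) = 0"
    "(LINT m|lborel. std_normal_density m * (cos_sinc t 0 m * m)) = 0"
    by (rule integral_lborel_odd_eq_0[OF measurable(1)] integral_lborel_odd_eq_0[OF measurable(2)];
        simp add: std_normal_density_def)+
qed

lemma Lam1_eq: "Lam1 1 1 t = pauli_diag ((1 + decay t) / 2) ((1 - decay t) / 2) 0"
proof
  fix \<rho>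
  have "evolve ((1/2) *\<^sub>R ((1 * m) *\<^sub>R sigma_z)) t \<rho> =
     ((1 + cos (t * m)) / 2) *\<^sub>R \<rho> + (cos_sinc t m 0 * m) *\<^sub>R comm_z \<rho>
       + ((1 - cos (t * m)) / 2) *\<^sub>R conj_z \<rho>" for m
    using evolve_pauli_field[of m 0] by (simp add: pauli_field_def cos_sq_axis sinc_sq_axis)
  then have "Lam1 1 1 t \<rho> = (LINT m|lborel. std_normal_density m *\<^sub>R
     (((1 + cos (t * m)) / 2) *\<^sub>R \<rho> + (cos_sinc t m 0 * m) *\<^sub>R comm_z \<rho>
       + ((1 - cos (t * m)) / 2) *\<^sub>R conj_z \<rho>))"
    by (simp add: Lam1_def gauss_1)
  also have "\<dots> = pauli_diag ((1 + decay t) / 2) ((1 - decay t) / 2) 0 \<rho>"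
    unfolding integral_scaleR_sum3[OF integrable_single_magnet_coefficients(1,3,2)]
      integral_single_magnet_coefficients
    by (simp add: pauli_diag_def)
  finally show "Lam1 1 1 t \<rho> = pauli_diag ((1 + decay t) / 2) ((1 - decay t) / 2) 0 \<rho>" .
qed

lemma Lam2_eq: "Lam2 1 1 t = pauli_diag ((1 + decay t) / 2) 0 ((1 - decay t) / 2)"
proof
  fix \<rho>
  have "evolve ((1/2) *\<^sub>R ((1 * m) *\<^sub>R sigma_x)) t \<rho> =
     ((1 + cos (t * m)) / 2) *\<^sub>R \<rho> + (cos_sinc t 0 m * m) *\<^sub>R comm_x \<rho>
       + ((1 - cos (t * m)) / 2) *\<^sub>R conj_x \<rho>" for m
    using evolve_pauli_field[of 0 m] by (simp add: pauli_field_def cos_sq_axis sinc_sq_axis)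
  then have "Lam2 1 1 t \<rho> = (LINT m|lborel. std_normal_density m *\<^sub>R
     (((1 + cos (t * m)) / 2) *\<^sub>R \<rho> + (cos_sinc t 0 m * m) *\<^sub>R comm_x \<rho>
       + ((1 - cos (t * m)) / 2) *\<^sub>R conj_x \<rho>))"
    by (simp add: Lam2_def gauss_1)
  also have "\<dots> = pauli_diag ((1 + decay t) / 2) 0 ((1 - decay t) / 2) \<rho>"
    unfolding integral_scaleR_sum3[OF integrable_single_magnet_coefficients(1,4,2)]
      integral_single_magnet_coefficients
    by (simp add: pauli_diag_def)
  finally show "Lam2 1 1 t \<rho> = pauli_diag ((1 + decay t) / 2) 0 ((1 - decay t) / 2) \<rho>" .
qed

section \<open>Time derivatives of the weights\<close>

lemma abs_difference_quotient_le:
  fixes g g' :: "real \<Rightarrow> real"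
  assumes deriv: "\<And>s. s \<in> ball t d \<Longrightarrow> (g has_real_derivative g' s) (at s)"
    and bound: "\<And>s. s \<in> ball t d \<Longrightarrow> \<bar>g' s\<bar> \<le> B"
    and h: "t + h \<in> ball t d" "h \<noteq> 0"
  shows "\<bar>(g (t + h) - g t) / h\<bar> \<le> B"
proof -
  have "norm (g (t + h) - g t) \<le> B * norm (t + h - t)"
  proof (rule field_differentiable_bound[where S="ball t d" and f'=g'])
    show "(g has_field_derivative g' s) (at s within ball t d)" if "s \<in> ball t d" for s
      using deriv[OF that] by (rule has_field_derivative_at_within)
    show "norm (g' s) \<le> B" if "s \<in> ball t d" for s
      using bound[OF that] by simp
  qed (use h in \<open>auto simp: dist_norm\<close>)
  with h(2) show ?thesis
    by (simp add: abs_divide divide_le_eq)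
qed

context
  fixes f f' :: "real \<Rightarrow> 'a \<Rightarrow> real" and M :: "'a measure" and t d :: real and w :: "'a \<Rightarrow> real"
  assumes d: "0 < d"
    and int: "\<And>s. s \<in> ball t d \<Longrightarrow> integrable M (f s)"
    and deriv: "\<And>s x. s \<in> ball t d \<Longrightarrow> ((\<lambda>s. f s x) has_real_derivative f' s x) (at s)"
    and bound: "\<And>s x. s \<in> ball t d \<Longrightarrow> \<bar>f' s x\<bar> \<le> w x"
    and w: "integrable M w"
    and measurable: "f' t \<in> borel_measurable M"
begin

lemma tendsto_integral_difference_quotient:
  "((\<lambda>h. integral\<^sup>L M (\<lambda>x. (f (t + h) x - f t x) / h)) \<longlongrightarrow> integral\<^sup>L M (f' t))
     (at 0 within ball 0 d)"
proof (unfold tendsto_at_iff_sequentially, intro allI impI)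
  fix X :: "nat \<Rightarrow> real"
  assume X: "\<forall>i. X i \<in> ball 0 d - {0}" and X0: "X \<longlonglongrightarrow> 0"
  let ?q = "\<lambda>h x. (f (t + h) x - f t x) / h"
  have t: "t \<in> ball t d"
    using d by simp
  have in_ball: "t + X i \<in> ball t d" and nonzero: "X i \<noteq> 0" for i
    using X by (auto simp: dist_norm)
  have "(\<lambda>i. integral\<^sup>L M (?q (X i))) \<longlonglongrightarrow> integral\<^sup>L M (f' t)"
  proof (rule integral_dominated_convergence[where w=w])
    show "f' t \<in> borel_measurable M" "integrable M w"
      by (fact measurable, fact w)
    show "?q (X i) \<in> borel_measurable M" for i
      using int[OF in_ball[of i]] int[OF t] by measurable
    have X_at_0: "filterlim X (at 0) sequentially"
      using X0 nonzero by (auto simp: filterlim_at)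
    show "AE x in M. (\<lambda>i. ?q (X i) x) \<longlonglongrightarrow> f' t x"
    proof (rule AE_I2)
      fix x
      have "((\<lambda>h. ?q h x) \<longlongrightarrow> f' t x) (at 0)"
        using deriv[OF t, of x] by (simp add: DERIV_def)
      from filterlim_compose[OF this X_at_0] show "(\<lambda>i. ?q (X i) x) \<longlonglongrightarrow> f' t x"
        by simp
    qed
    show "AE x in M. norm (?q (X i) x) \<le> w x" for i
      using abs_difference_quotient_le[OF deriv bound in_ball nonzero] by simp
  qed
  then show "((\<lambda>h. integral\<^sup>L M (?q h)) \<circ> X) \<longlonglongrightarrow> integral\<^sup>L M (f' t)"
    by (simp add: o_def)
qed

lemma has_real_derivative_integral_dominated:
  "((\<lambda>s. integral\<^sup>L M (f s)) has_real_derivative integral\<^sup>L M (f' t)) (at t)"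
proof -
  have quotient: "(integral\<^sup>L M (f (t + h)) - integral\<^sup>L M (f t)) / h
      = integral\<^sup>L M (\<lambda>x. (f (t + h) x - f t x) / h)" if "h \<in> ball 0 d" for h
    using int[of "t + h"] int[of t] d that by (simp add: diff_divide_distrib dist_norm)
  have "\<forall>\<^sub>F h in at 0 within ball 0 d. integral\<^sup>L M (\<lambda>x. (f (t + h) x - f t x) / h)
      = (integral\<^sup>L M (f (t + h)) - integral\<^sup>L M (f t)) / h"
    unfolding eventually_at_filter by (intro always_eventually) (simp add: quotient)
  then have "((\<lambda>h. (integral\<^sup>L M (f (t + h)) - integral\<^sup>L M (f t)) / h) \<longlongrightarrow> integral\<^sup>L M (f' t))
      (at 0 within ball 0 d)"
    by (rule Lim_transform_eventually[OF tendsto_integral_difference_quotient])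
  moreover have "at (0::real) within ball 0 d = at 0"
    using d by (intro at_within_open) auto
  ultimately show ?thesis
    by (simp add: DERIV_def)
qed

end

context
  fixes w w' :: "real \<Rightarrow> real \<Rightarrow> real \<Rightarrow> real" and t d C :: real
  assumes d: "0 < d"
    and w: "\<And>s. poly_bounded (w s)"
    and deriv: "\<And>s x y. s \<in> ball t d \<Longrightarrow> ((\<lambda>s. w s x y) has_real_derivative w' s x y) (at s)"
    and w': "\<And>s. s \<in> ball t d \<Longrightarrow> poly_bounded (w' s)"
    and bound: "\<And>s x y. s \<in> ball t d \<Longrightarrow> \<bar>w' s x y\<bar> \<le> C * (1 + x^4 + y^4)"
begin

lemma has_real_derivative_avg2_inner:
  assumes s0: "s0 \<in> ball t d"
  shows "((\<lambda>s. LINT y|lborel. std_normal_density x * std_normal_density y * w s x y)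
    has_real_derivative (LINT y|lborel. std_normal_density x * std_normal_density y * w' s0 x y))
    (at s0)"
proof (rule has_real_derivative_integral_dominated[where d="d - dist t s0"])
  have sub: "s \<in> ball t d" if "s \<in> ball s0 (d - dist t s0)" for s
    using that dist_triangle[of t s s0] by (auto simp: dist_commute)
  show "((\<lambda>s. std_normal_density x * std_normal_density y * w s x y) has_real_derivative
      std_normal_density x * std_normal_density y * w' s x y) (at s)"
    if "s \<in> ball s0 (d - dist t s0)" for s y
    using deriv[OF sub[OF that]] by (rule DERIV_cmult)
  show "\<bar>std_normal_density x * std_normal_density y * w' s x y\<bar>
      \<le> std_normal_density x * C * (1 + x^4) * std_normal_density y
        + std_normal_density x * C * (std_normal_density y * y^4)"
    if "s \<in> ball s0 (d - dist t s0)" for s y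
    by (rule abs_std_normal_product_le[OF bound[OF sub[OF that]]])
  show "integrable lborel (\<lambda>y. std_normal_density x * std_normal_density y * w s x y)" for s
    by (rule integrable_avg2_inner[OF w])
  show "(\<lambda>y. std_normal_density x * std_normal_density y * w' s0 x y) \<in> borel_measurable lborel"
    by (rule borel_measurable_integrable[OF integrable_avg2_inner[OF w'[OF s0]]])
qed (use s0 integrable_std_normal_product_majorant in simp_all)

lemma has_real_derivative_avg2: "((\<lambda>s. avg2 (w s)) has_real_derivative avg2 (w' t)) (at t)"
proof -
  have "((\<lambda>s. LINT x|lborel. LINT y|lborel. std_normal_density x * std_normal_density y * w s x y)
      has_real_derivative
      (LINT x|lborel. LINT y|lborel. std_normal_density x * std_normal_density y * w' t x y)) (at t)"
  proof (rule has_real_derivative_integral_dominated[where d=d])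
    show "\<bar>LINT y|lborel. std_normal_density x * std_normal_density y * w' s x y\<bar>
        \<le> std_normal_density x * C * (4 + x^4)" if "s \<in> ball t d" for s x
      by (rule abs_avg2_inner_le[OF w'[OF that] bound[OF that]])
    show "integrable lborel (\<lambda>x. LINT y|lborel. std_normal_density x * std_normal_density y * w s x y)"
      for s
      by (rule integrable_avg2_outer[OF w])
    show "(\<lambda>x. LINT y|lborel. std_normal_density x * std_normal_density y * w' t x y)
        \<in> borel_measurable lborel"
      using borel_measurable_avg2_inner[OF w'] d by simp
  qed (use d has_real_derivative_avg2_inner integrable_std_normal_quartic in simp_all)
  then show ?thesis
    by (simp add: avg2_def)
qed

end

lemma sinc_sq_has_real_derivative:
  "((\<lambda>s. sinc_sq s x y) has_real_derivative cos_sinc s x y) (at s)"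
proof -
  define r where "r = sqrt (x\<^sup>2 + y\<^sup>2)"
  have "((\<lambda>s. s / 2 * sinc_fn (s * r / 2)) has_real_derivative cos (s * r / 2) / 2) (at s)"
  proof (cases "r = 0")
    case True
    then show ?thesis by (auto intro!: derivative_eq_intros)
  next
    case False
    then have "(\<lambda>s. s / 2 * sinc_fn (s * r / 2)) = (\<lambda>s. sin (s * r / 2) / r)"
      by (auto simp: fun_eq_iff sinc_fn_def field_simps)
    with False show ?thesis
      by (auto intro!: derivative_eq_intros simp: field_simps)
  qed
  from DERIV_power[OF this, of 2] show ?thesis
    by (simp add: sinc_sq_def cos_sinc_def phase_def r_def algebra_simps)
qed

lemma has_real_derivative_avg2_sinc_sq:
  assumes m: "poly_bounded m"
  shows "((\<lambda>s. avg2 (\<lambda>x y. sinc_sq s x y * m x y)) has_real_derivative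
    avg2 (\<lambda>x y. cos_sinc t x y * m x y)) (at t)"
proof -
  obtain C where C: "\<And>x y. \<bar>m x y\<bar> \<le> C * (1 + x^4 + y^4)"
    using m by (auto simp: poly_bounded_def)
  have bound: "\<bar>cos_sinc s x y * m x y\<bar> \<le> (\<bar>t\<bar> + 1) / 2 * C * (1 + x^4 + y^4)"
    if "s \<in> ball t 1" for s x y
  proof -
    have "\<bar>cos_sinc s x y\<bar> \<le> (\<bar>t\<bar> + 1) / 2"
      using abs_cos_sinc_le[of s x y] that by (auto simp: dist_real_def)
    then show ?thesis
      unfolding abs_mult mult.assoc using C by (intro mult_mono) auto
  qed
  show ?thesis
    by (rule has_real_derivative_avg2[where d=1, OF _ poly_bounded_coefficient_mult(3)[OF m] _
          poly_bounded_coefficient_mult(2)[OF m] bound])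
      (auto intro!: DERIV_cmult_right sinc_sq_has_real_derivative)
qed

lemma weight_z_has_real_derivative:
  "(weight_z has_real_derivative avg2 (\<lambda>x y. cos_sinc t x y * x\<^sup>2)) (at t)"
  unfolding weight_z_def[abs_def]
  by (rule has_real_derivative_avg2_sinc_sq[OF poly_bounded_monomials(4)])

lemma weight_x_has_real_derivative:
  "(weight_x has_real_derivative avg2 (\<lambda>x y. cos_sinc t x y * y\<^sup>2)) (at t)"
  unfolding weight_x_def[abs_def]
  by (rule has_real_derivative_avg2_sinc_sq[OF poly_bounded_monomials(5)])

section \<open>Estimates for the weights\<close>

lemma weight_z_le: "weight_z t \<le> t\<^sup>2 / 4"
  and weight_x_le: "weight_x t \<le> t\<^sup>2 / 4"
proof -
  have le: "sinc_sq t x y * m \<le> t\<^sup>2 / 4 * m" if "0 \<le> m" for x y m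
    using sinc_sq_le that by (rule mult_right_mono)
  have "weight_z t \<le> avg2 (\<lambda>x y. t\<^sup>2 / 4 * x\<^sup>2)"
    unfolding weight_z_def
    by (rule avg2_mono[OF poly_bounded_coefficient_mult(3) poly_bounded_cmult le];
        rule poly_bounded_monomials zero_le_power2)
  moreover have "weight_x t \<le> avg2 (\<lambda>x y. t\<^sup>2 / 4 * y\<^sup>2)"
    unfolding weight_x_def
    by (rule avg2_mono[OF poly_bounded_coefficient_mult(3) poly_bounded_cmult le];
        rule poly_bounded_monomials zero_le_power2)
  ultimately show "weight_z t \<le> t\<^sup>2 / 4" "weight_x t \<le> t\<^sup>2 / 4"
    by (simp_all only: avg2_cmult avg2_fst_sq avg2_snd_sq mult_1_right)
qed

lemma abs_sin_minus_le: "\<bar>sin z - z\<bar> \<le> \<bar>z\<bar> ^ 3 / (6::real)"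
proof -
  have "(\<Sum>m<3. sin_coeff m * z ^ m) = z"
    by (simp add: numeral_3_eq_3 sin_coeff_def)
  moreover have "inverse (fact 3) * \<bar>z\<bar> ^ 3 = \<bar>z\<bar> ^ 3 / (6::real)"
    by (simp add: numeral_3_eq_3 field_simps)
  ultimately show ?thesis
    using Maclaurin_sin_bound[of z 3] by (simp only:)
qed

lemma sin_sq_ge: "(z::real)\<^sup>2 - z^4 / 3 \<le> (sin z)\<^sup>2"
proof -
  define a where "a = \<bar>z\<bar>"
  have z: "z\<^sup>2 = a\<^sup>2" "z^4 = (a\<^sup>2)\<^sup>2"
    by (simp_all add: a_def flip: power_mult power_abs)
  have "a ^ 3 = a * a\<^sup>2"
    by (simp add: power2_eq_square power3_eq_cube)
  then have lower: "a - a * a\<^sup>2 / 6 \<le> \<bar>sin z\<bar>"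
    using abs_sin_minus_le[of z] abs_triangle_ineq2[of z "sin z"]
    unfolding a_def[symmetric] by (simp add: abs_minus_commute)
  show ?thesis
  proof (cases "0 \<le> a - a * a\<^sup>2 / 6")
    case True
    have "(a - a * a\<^sup>2 / 6)\<^sup>2 \<le> (sin z)\<^sup>2"
      using True lower by (metis power2_abs power_mono)
    moreover have "(a - a * a\<^sup>2 / 6)\<^sup>2 = a\<^sup>2 - (a\<^sup>2)\<^sup>2 / 3 + a\<^sup>2 * (a\<^sup>2)\<^sup>2 / 36"
      by (simp add: power2_eq_square field_simps)
    moreover have "0 \<le> a\<^sup>2 * (a\<^sup>2)\<^sup>2 / 36"
      by simp
    ultimately show ?thesis
      unfolding z by linarith
  next
    case False
    then have "a * (1 - a\<^sup>2 / 6) < 0"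
      by (simp add: algebra_simps)
    then have "1 - a\<^sup>2 / 6 < 0"
      by (simp add: a_def mult_less_0_iff)
    then have "0 < a\<^sup>2" "1 - a\<^sup>2 / 3 < 0"
      by linarith+
    then have "a\<^sup>2 * (1 - a\<^sup>2 / 3) < 0"
      by (rule mult_pos_neg)
    then have "a\<^sup>2 - (a\<^sup>2)\<^sup>2 / 3 < 0"
      by (simp add: power2_eq_square algebra_simps)
    then show ?thesis
      unfolding z using zero_le_power2[of "sin z"] by linarith
  qed
qed

lemma sin_sq_phase_ge:
  "t\<^sup>2 / 4 * x\<^sup>2 + t\<^sup>2 / 4 * y\<^sup>2 + (- (t^4 / 24) * x^4 + - (t^4 / 24) * y^4) \<le> (sin (phase t x y))\<^sup>2"
proof -
  let ?p = "phase t x y"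
  have p2: "?p\<^sup>2 = t\<^sup>2 * (x\<^sup>2 + y\<^sup>2) / 4"
    by (simp add: phase_def power_mult_distrib power_divide)
  have "(x\<^sup>2 + y\<^sup>2)\<^sup>2 \<le> 2 * (x^4 + y^4)"
    using zero_le_power2[of "x\<^sup>2 - y\<^sup>2"] by (simp add: power2_diff power2_sum flip: power_mult)
  then have "t^4 * (x\<^sup>2 + y\<^sup>2)\<^sup>2 \<le> t^4 * (2 * (x^4 + y^4))"
    by (rule mult_left_mono) simp
  then have "t^4 * (x\<^sup>2 + y\<^sup>2)\<^sup>2 / 16 \<le> t^4 * (x^4 + y^4) / 8"
    by (simp add: algebra_simps)
  moreover have "(?p\<^sup>2)\<^sup>2 = t^4 * (x\<^sup>2 + y\<^sup>2)\<^sup>2 / 16"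
    unfolding p2 by (simp add: power_mult_distrib power_divide flip: power_mult)
  moreover have "?p^4 = (?p\<^sup>2)\<^sup>2"
    by (simp flip: power_mult)
  ultimately have "t\<^sup>2 / 4 * x\<^sup>2 + t\<^sup>2 / 4 * y\<^sup>2 + (- (t^4 / 24) * x^4 + - (t^4 / 24) * y^4)
      \<le> ?p\<^sup>2 - ?p^4 / 3"
    unfolding p2 by (simp add: algebra_simps)
  also have "\<dots> \<le> (sin ?p)\<^sup>2"
    by (rule sin_sq_ge)
  finally show ?thesis .
qed

lemma weight_sum_ge: "t\<^sup>2 / 2 - t^4 / 4 \<le> weight_z t + weight_x t"
proof -
  note pb = poly_bounded_cmult poly_bounded_monomials poly_bounded_add
  have "t\<^sup>2 / 2 - t^4 / 4
      = avg2 (\<lambda>x y. t\<^sup>2 / 4 * x\<^sup>2 + t\<^sup>2 / 4 * y\<^sup>2 + (- (t^4 / 24) * x^4 + - (t^4 / 24) * y^4))"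
    by (simp only: avg2_add avg2_cmult pb avg2_fst_sq avg2_snd_sq avg2_fst_pow4 avg2_snd_pow4)
  also have "\<dots> \<le> avg2 (\<lambda>x y. sinc_sq t x y * x\<^sup>2 + sinc_sq t x y * y\<^sup>2)"
    using sin_sq_phase_ge
    by (intro avg2_mono pb poly_bounded_coefficient_mult) (simp add: sinc_sq_sum_eq_sin_sq)
  also have "\<dots> = weight_z t + weight_x t"
    unfolding weight_z_def weight_x_def
    by (intro avg2_add poly_bounded_coefficient_mult poly_bounded_monomials)
  finally show ?thesis .
qed

lemma weight_sum_pos:
  assumes "0 < t" "t < 1"
  shows "0 < weight_z t + weight_x t"
proof -
  have "0 < t\<^sup>2" "t\<^sup>2 < 1"
    using assms by (simp_all add: abs_square_less_1)
  then have "t\<^sup>2 * t\<^sup>2 < t\<^sup>2 * 1"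
    by (intro mult_strict_left_mono)
  moreover have "t^4 = t\<^sup>2 * t\<^sup>2"
    by (simp add: power2_eq_square power4_eq_xxxx)
  ultimately show ?thesis
    using weight_sum_ge[of t] \<open>0 < t\<^sup>2\<close> by linarith
qed
section \<open>The generators\<close>

lemma decay_pos: "0 < decay t"
  by (simp add: decay_def)

lemma decay_has_real_derivative: "(decay has_real_derivative (- t * decay t)) (at t)"
  unfolding decay_def[abs_def] by (auto intro!: derivative_eq_intros simp: power2_eq_square)

lemma single_magnet_coefficients_has_real_derivative:
  "((\<lambda>s. (1 + decay s) / 2) has_real_derivative - t * decay t / 2) (at t)"
  "((\<lambda>s. (1 - decay s) / 2) has_real_derivative t * decay t / 2) (at t)"
  "((\<lambda>s. 0) has_real_derivative 0) (at t)"
  using decay_has_real_derivative[of t] by (auto intro!: derivative_eq_intros)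

lemma regular_Lam1: "regular_at (Lam1 1 1) t"
  and generator_Lam1: "generator (Lam1 1 1) t sigma_x = (- t) *\<^sub>R sigma_x"
    "generator (Lam1 1 1) t sigma_y = (- t) *\<^sub>R sigma_y"
    "generator (Lam1 1 1) t sigma_z = 0"
  using regular_pauli_diag[OF single_magnet_coefficients_has_real_derivative]
    generator_pauli_diag[OF single_magnet_coefficients_has_real_derivative] decay_pos[of t]
  by (simp_all add: Lam1_eq[abs_def] field_simps)

lemma regular_Lam2: "regular_at (Lam2 1 1) t"
  and generator_Lam2: "generator (Lam2 1 1) t sigma_x = 0"
    "generator (Lam2 1 1) t sigma_y = (- t) *\<^sub>R sigma_y"
    "generator (Lam2 1 1) t sigma_z = (- t) *\<^sub>R sigma_z"
  using regular_pauli_diag[OF single_magnet_coefficients_has_real_derivative(1,3,2)]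
    generator_pauli_diag[OF single_magnet_coefficients_has_real_derivative(1,3,2)] decay_pos[of t]
  by (simp_all add: Lam2_eq[abs_def] field_simps)

lemma eigenvalues_Lam12_pos:
  assumes "t\<^sup>2 < 1"
  shows "0 < 1 - 2 * weight_z t" "0 < 1 - 2 * weight_x t" "0 < 1 - 2 * weight_z t - 2 * weight_x t"
  using weight_z_le[of t] weight_x_le[of t] assms by linarith+

lemma regular_Lam12:
  assumes "t\<^sup>2 < 1"
  shows "regular_at (Lam12 1 1 1 1) t"
  using regular_pauli_diag[OF DERIV_diff[OF DERIV_diff[OF DERIV_const weight_z_has_real_derivative]
        weight_x_has_real_derivative] weight_z_has_real_derivative weight_x_has_real_derivative]
    eigenvalues_Lam12_pos[OF assms]
  by (simp add: Lam12_eq[abs_def])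

lemma generator_Lam12:
  assumes A': "(weight_z has_real_derivative A') (at t)"
    and B': "(weight_x has_real_derivative B') (at t)"
    and "t\<^sup>2 < 1"
  shows "generator (Lam12 1 1 1 1) t sigma_x = (- 2 * A' / (1 - 2 * weight_z t)) *\<^sub>R sigma_x"
    "generator (Lam12 1 1 1 1) t sigma_y
       = (- 2 * (A' + B') / (1 - 2 * weight_z t - 2 * weight_x t)) *\<^sub>R sigma_y"
    "generator (Lam12 1 1 1 1) t sigma_z = (- 2 * B' / (1 - 2 * weight_x t)) *\<^sub>R sigma_z"
  using generator_pauli_diag[OF DERIV_diff[OF DERIV_diff[OF DERIV_const A'] B'] A' B']
    eigenvalues_Lam12_pos[OF assms(3)]
  by (simp_all add: Lam12_eq[abs_def] algebra_simps)

lemma eigenvalue_equations_force_zero: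
  fixes a b a' b' t :: real
  assumes "- 2 * a' / (1 - 2 * a) = - t" "1 - 2 * a \<noteq> 0"
    and "- 2 * (a' + b') / (1 - 2 * a - 2 * b) = - t + - t" "1 - 2 * a - 2 * b \<noteq> 0"
    and "- 2 * b' / (1 - 2 * b) = - t" "1 - 2 * b \<noteq> 0"
  shows "t * (a + b) = 0"
proof -
  have "2 * a' = t * (1 - 2 * a)" "2 * (a' + b') = 2 * t * (1 - 2 * a - 2 * b)"
    "2 * b' = t * (1 - 2 * b)"
    using assms by (simp_all add: divide_eq_eq)
  then show ?thesis
    by (simp add: algebra_simps)
qed

lemma generator_not_additive:
  assumes "0 < t" "t < 1"
  shows "generator (Lam12 1 1 1 1) t \<noteq> (\<lambda>\<rho>. generator (Lam1 1 1) t \<rho> + generator (Lam2 1 1) t \<rho>)"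
proof
  assume additive:
    "generator (Lam12 1 1 1 1) t = (\<lambda>\<rho>. generator (Lam1 1 1) t \<rho> + generator (Lam2 1 1) t \<rho>)"
  have t2: "t\<^sup>2 < 1"
    using assms by (simp add: abs_square_less_1)
  define A' where "A' = avg2 (\<lambda>x y. cos_sinc t x y * x\<^sup>2)"
  define B' where "B' = avg2 (\<lambda>x y. cos_sinc t x y * y\<^sup>2)"
  note generator_Lam12 = generator_Lam12[OF weight_z_has_real_derivative weight_x_has_real_derivative t2,
      folded A'_def B'_def]
  have scaleR_eq: "a = b" if "a *\<^sub>R v = b *\<^sub>R v" "v \<noteq> 0" for a b :: real and v :: qmat
    using that by simp
  have "(- 2 * A' / (1 - 2 * weight_z t)) *\<^sub>R sigma_x = (- t) *\<^sub>R sigma_x"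
    using fun_cong[OF additive, of sigma_x]
    unfolding generator_Lam12 generator_Lam1 generator_Lam2 by (simp only: add_0_right)
  note x = scaleR_eq[OF this sigma_nonzero(1)]
  have "(- 2 * (A' + B') / (1 - 2 * weight_z t - 2 * weight_x t)) *\<^sub>R sigma_y = (- t + - t) *\<^sub>R sigma_y"
    using fun_cong[OF additive, of sigma_y]
    unfolding generator_Lam12 generator_Lam1 generator_Lam2 scaleR_left_distrib[symmetric]
    by (simp only:)
  note y = scaleR_eq[OF this sigma_nonzero(2)]
  have "(- 2 * B' / (1 - 2 * weight_x t)) *\<^sub>R sigma_z = (- t) *\<^sub>R sigma_z"
    using fun_cong[OF additive, of sigma_z]
    unfolding generator_Lam12 generator_Lam1 generator_Lam2 by (simp only: add_0_left)
  note z = scaleR_eq[OF this sigma_nonzero(3)]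
  have "t * (weight_z t + weight_x t) = 0"
    using eigenvalue_equations_force_zero[OF x _ y _ z] eigenvalues_Lam12_pos[OF t2] by simp
  moreover have "0 < weight_z t + weight_x t"
    using weight_sum_pos[OF assms] .
  ultimately show False
    using assms by simp
qed

theorem mainTheorem7:
  shows "\<exists>g1 g2 s1 s2 t. g1 > 0 \<and> g2 > 0 \<and> s1 > 0 \<and> s2 > 0 \<and> t > 0 \<and>
    regular_at (Lam12 g1 g2 s1 s2) t \<and> regular_at (Lam1 g1 s1) t \<and> regular_at (Lam2 g2 s2) t \<and>
    generator (Lam12 g1 g2 s1 s2) t \<noteq>
      (\<lambda>\<rho>. generator (Lam1 g1 s1) t \<rho> + generator (Lam2 g2 s2) t \<rho>)"
proof -
  have "regular_at (Lam12 1 1 1 1) (1/2)"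
    by (rule regular_Lam12) (simp add: power2_eq_square)
  moreover have "generator (Lam12 1 1 1 1) (1/2)
      \<noteq> (\<lambda>\<rho>. generator (Lam1 1 1) (1/2) \<rho> + generator (Lam2 1 1) (1/2) \<rho>)"
    by (rule generator_not_additive) simp_all
  moreover have "(0::real) < 1" "(0::real) < 1/2"
    by simp_all
  ultimately show ?thesis
    using regular_Lam1 regular_Lam2 by blast
qed

end
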